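(* Let $\varepsilon>0$ and let $f$ be continuous on $[0,1]$. Let $u\in H^1_0(0,1)$ be the solution of $$\varepsilon\,(u',v')+(u',v)=(f,v)\quad\text{for all } v\in H^1_0(0,1).$$ Let $n\ge 2$, $h=1/n$, $x_j=jh$ ($j=0,\dots,n$). Let $\mathcal{M}_h\subset H^1_0(0,1)$ be the space of continuous functions on $[0,1]$ that are linear on each $[x_{j-1},x_j]$ and vanish at $0$ and $1$, and let $V_h\subset H^1_0(0,1)$ be the space of continuous functions on $[0,1]$ that are quadratic polynomials on each $[x_{j-1},x_j]$ and vanish at $0$ and $1$. Let $(w_h,u_h)\in V_h\times\mathcal{M}_h$ be the solution of the saddle point least squares ($P^1$–$P^2$) discretization $$\begin{aligned} (w_h',v_h')+\varepsilon\,(u_h',v_h')+(u_h',v_h)&=(f,v_h)&&\text{for all } v_h\in V_h,\\ \varepsilon\,(q_h',w_h')+(q_h',w_h)&=0&&\text{for all } q_h\in\mathcal{M}_h. \end{aligned}$$ For $v\in H^1_0(0,1)$ define $\|v\|_*^2:=\varepsilon^2\|v'\|^2+\|v\|^2-\overline{v}^2$, where $\|\cdot\|$ is the $L^2(0,1)$ norm and $\overline{v}=\int_0^1 v(x)\,dx$. Then $$\|u-u_h\|_*\le \inf_{p_h\in\mathcal{M}_h}\|u-p_h\|_*\le \|u-u_I\|_*,$$ where $u_I\in\mathcal{M}_h$ is the linear interpolant of $u$ at the nodes $x_0,\dots,x_n$.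
   Context: $(\cdot,\cdot)$ denotes the $L^2(0,1)$ inner product. Note $\|v\|^2-\overline{v}^2=\|v-\overline{v}\|^2$, so $\|\cdot\|_*$ is a norm on $H^1_0(0,1)$. *)

theory Defs
  imports "HOL-Analysis.Analysis"
begin

definition ip :: "(real \<Rightarrow> real) \<Rightarrow> (real \<Rightarrow> real) \<Rightarrow> real" where
  "ip f g = (LINT x:{0..1}|lborel. f x * g x)"

definition L2norm :: "(real \<Rightarrow> real) \<Rightarrow> real" where
  "L2norm f = sqrt (ip f f)"

definition mean :: "(real \<Rightarrow> real) \<Rightarrow> real" where
  "mean v = (LINT x:{0..1}|lborel. v x)"

definition L2 :: "(real \<Rightarrow> real) \<Rightarrow> bool" where
  "L2 g \<longleftrightarrow> set_borel_measurable lborel {0..1} g \<and> set_integrable lborel {0..1} (\<lambda>x. (g x)^2)"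

text \<open>v belongs to H^1_0(0,1) with weak derivative dv: v is (on [0,1]) the
  primitive of the square-integrable dv, vanishing at 0 and 1.\<close>
definition H10 :: "(real \<Rightarrow> real) \<Rightarrow> (real \<Rightarrow> real) \<Rightarrow> bool" where
  "H10 v dv \<longleftrightarrow> L2 dv \<and> (\<forall>x\<in>{0..1}. v x = (LINT t:{0..x}|lborel. dv t)) \<and> v 1 = 0"

definition Mh :: "nat \<Rightarrow> (real \<Rightarrow> real) \<Rightarrow> bool" where
  "Mh n p \<longleftrightarrow> continuous_on {0..1} p \<and> p 0 = 0 \<and> p 1 = 0 \<and>
     (\<forall>j\<in>{1..n}. \<exists>a b. \<forall>x\<in>{real (j-1)/real n..real j/real n}. p x = a + b * x)"

definition Vh :: "nat \<Rightarrow> (real \<Rightarrow> real) \<Rightarrow> bool" where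
  "Vh n p \<longleftrightarrow> continuous_on {0..1} p \<and> p 0 = 0 \<and> p 1 = 0 \<and>
     (\<forall>j\<in>{1..n}. \<exists>a b c. \<forall>x\<in>{real (j-1)/real n..real j/real n}. p x = a + b * x + c * x^2)"

definition snorm :: "real \<Rightarrow> (real \<Rightarrow> real) \<Rightarrow> (real \<Rightarrow> real) \<Rightarrow> real" where
  "snorm eps v dv = sqrt (eps^2 * (L2norm dv)^2 + (L2norm v)^2 - (mean v)^2)"

end

theory Submission
  imports Defs
begin

text \<open>
  Write (v, w)_* = eps^2 (v', w') + (v, w) - mean v * mean w, so that ||v||_*^2 = (v, v)_*.
  The error e = u - u_h is (.,.)_*-orthogonal to M_h; by Pythagoras this makes u_h the best
  approximation of u from M_h, and u_I is one of the competitors. For orthogonality take q in M_h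
  and its lift v in H^1_0, with v' = eps q' - q + mean q. As a primitive of a piecewise linear
  function, v is piecewise quadratic, so v lies in V_h. Integration by parts gives
  (e, q)_* = (eps e' - e, v') = eps (e', v') + (e', v); subtracting the continuous equation from
  the first discrete one turns this into (w_h', v'), which integration by parts turns into
  eps (q', w_h') + (q', w_h) = 0, the second discrete equation.
  Neither eps > 0, n >= 2, the continuity of f nor the nodal values of u_I are needed.
\<close>

lemma set_borel_measurable_iff_restrict_space:
  fixes f :: "real \<Rightarrow> real"
  shows "set_borel_measurable lborel {a..b} f \<longleftrightarrow> f \<in> borel_measurable (restrict_space lborel {a..b})"
  unfolding set_borel_measurable_def by (simp add: borel_measurable_restrict_space_iff)

lemma L2_iff:
  "L2 g \<longleftrightarrow> g \<in> borel_measurable (restrict_space lborel {0..1}) \<and>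
     set_integrable lborel {0..1} (\<lambda>x. (g x)\<^sup>2)"
  unfolding L2_def set_borel_measurable_iff_restrict_space ..

lemma L2_mult_integrable:
  assumes "L2 f" "L2 g"
  shows "set_integrable lborel {0..1} (\<lambda>x. f x * g x)"
proof (rule set_integrable_bound)
  show "set_integrable lborel {0..1} (\<lambda>x. (f x)\<^sup>2 + (g x)\<^sup>2)"
    using assms unfolding L2_def by (intro set_integral_add) auto
  have [measurable]: "f \<in> borel_measurable (restrict_space lborel {0..1})"
    "g \<in> borel_measurable (restrict_space lborel {0..1})"
    using assms unfolding L2_iff by auto
  show "set_borel_measurable lborel {0..1} (\<lambda>x. f x * g x)"
    unfolding set_borel_measurable_iff_restrict_space by measurable
  show "AE x in lborel. x \<in> {0..1} \<longrightarrow> norm (f x * g x) \<le> norm ((f x)\<^sup>2 + (g x)\<^sup>2)"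
  proof (intro AE_I2 impI)
    fix x
    have "2 * (\<bar>f x\<bar> * \<bar>g x\<bar>) \<le> (f x)\<^sup>2 + (g x)\<^sup>2"
      using sum_squares_bound[of "\<bar>f x\<bar>" "\<bar>g x\<bar>"] by simp
    moreover have "0 \<le> \<bar>f x\<bar> * \<bar>g x\<bar>"
      by simp
    ultimately have "\<bar>f x\<bar> * \<bar>g x\<bar> \<le> (f x)\<^sup>2 + (g x)\<^sup>2"
      by linarith
    then show "norm (f x * g x) \<le> norm ((f x)\<^sup>2 + (g x)\<^sup>2)"
      by (simp add: abs_mult)
  qed
qed

lemma L2_const: "L2 (\<lambda>_. c)"
  unfolding L2_iff by (simp add: set_integrable_def integrable_real_indicator emeasure_lborel_Icc_eq)

lemma L2_integrable: "L2 f \<Longrightarrow> set_integrable lborel {0..1} f"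
  using L2_mult_integrable[of f "\<lambda>_. 1"] L2_const by simp

lemma L2_integrable_Icc: "L2 f \<Longrightarrow> 0 \<le> a \<Longrightarrow> b \<le> 1 \<Longrightarrow> set_integrable lborel {a..b} f"
  by (rule set_integrable_subset[OF L2_integrable]) auto

lemma L2_add:
  assumes "L2 f" "L2 g"
  shows "L2 (\<lambda>x. f x + g x)"
proof -
  have [measurable]: "f \<in> borel_measurable (restrict_space lborel {0..1})"
    "g \<in> borel_measurable (restrict_space lborel {0..1})"
    using assms unfolding L2_iff by auto
  have "set_integrable lborel {0..1} (\<lambda>x. (f x)\<^sup>2 + 2 * (f x * g x) + (g x)\<^sup>2)"
    using assms L2_mult_integrable[OF assms] unfolding L2_def
    by (intro set_integral_add) auto
  then show ?thesis
    unfolding L2_iff by (simp add: power2_sum ac_simps)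
qed

lemma L2_mult: "L2 f \<Longrightarrow> L2 (\<lambda>x. c * f x)"
  unfolding L2_iff by (auto simp: power_mult_distrib)

lemma L2_diff: "L2 f \<Longrightarrow> L2 g \<Longrightarrow> L2 (\<lambda>x. f x - g x)"
  using L2_add[of f "\<lambda>x. -1 * g x"] L2_mult[of g "-1"] by simp

lemma continuous_on_imp_L2:
  assumes v: "continuous_on {0..1} v"
  shows "L2 v"
proof -
  have "(\<lambda>x. indicator {0..1::real} x *\<^sub>R v x) \<in> borel_measurable borel"
    using v by (intro borel_measurable_continuous_on_indicator) auto
  moreover have "integrable lborel (\<lambda>x. indicator {0..1::real} x *\<^sub>R (v x)\<^sup>2)"
    using v by (intro borel_integrable_compact continuous_on_power) auto
  ultimately show ?thesis
    unfolding L2_def set_borel_measurable_def set_integrable_def by simp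
qed

lemma ip_commute: "ip f g = ip g f"
  unfolding ip_def by (simp add: mult.commute)

lemma ip_add_left: "L2 f \<Longrightarrow> L2 g \<Longrightarrow> L2 h \<Longrightarrow> ip (\<lambda>x. f x + g x) h = ip f h + ip g h"
  unfolding ip_def using L2_mult_integrable[of f h] L2_mult_integrable[of g h]
  by (simp add: distrib_right)

lemma ip_diff_left: "L2 f \<Longrightarrow> L2 g \<Longrightarrow> L2 h \<Longrightarrow> ip (\<lambda>x. f x - g x) h = ip f h - ip g h"
  unfolding ip_def using L2_mult_integrable[of f h] L2_mult_integrable[of g h]
  by (simp add: left_diff_distrib)

lemma ip_mult_left: "ip (\<lambda>x. c * f x) h = c * ip f h"
  unfolding ip_def by (simp add: mult.assoc)

lemma ip_const_left: "ip (\<lambda>_. c) h = c * mean h"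
  unfolding ip_def mean_def by simp

lemma ip_add_right: "L2 f \<Longrightarrow> L2 g \<Longrightarrow> L2 h \<Longrightarrow> ip h (\<lambda>x. f x + g x) = ip h f + ip h g"
  using ip_add_left ip_commute by metis

lemma ip_diff_right: "L2 f \<Longrightarrow> L2 g \<Longrightarrow> L2 h \<Longrightarrow> ip h (\<lambda>x. f x - g x) = ip h f - ip h g"
  using ip_diff_left ip_commute by metis

lemma ip_mult_right: "ip h (\<lambda>x. c * f x) = c * ip h f"
  using ip_mult_left ip_commute by metis

lemma ip_const_right: "ip h (\<lambda>_. c) = c * mean h"
  using ip_const_left ip_commute by metis

lemma mean_add: "L2 f \<Longrightarrow> L2 g \<Longrightarrow> mean (\<lambda>x. f x + g x) = mean f + mean g"
  unfolding mean_def using L2_integrable by simp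

lemma mean_diff: "L2 f \<Longrightarrow> L2 g \<Longrightarrow> mean (\<lambda>x. f x - g x) = mean f - mean g"
  unfolding mean_def using L2_integrable by simp

lemma mean_mult: "mean (\<lambda>x. c * f x) = c * mean f"
  unfolding mean_def by simp

lemma mean_const: "mean (\<lambda>_. c) = c"
  unfolding mean_def by (simp add: set_integral_const)

lemma ip_self_nonneg: "0 \<le> ip f f"
  unfolding ip_def set_lebesgue_integral_def
  by (rule integral_nonneg_AE) (auto simp: indicator_def)

lemma mean_square_le_ip_self:
  assumes f: "L2 f"
  shows "(mean f)\<^sup>2 \<le> ip f f"
proof -
  define c where "c = mean f"
  have fc: "L2 (\<lambda>x. f x - c)"
    using f L2_const by (rule L2_diff)
  have "0 \<le> ip (\<lambda>x. f x - c) (\<lambda>x. f x - c)"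
    by (rule ip_self_nonneg)
  also have "\<dots> = ip f (\<lambda>x. f x - c) - c * mean (\<lambda>x. f x - c)"
    using ip_diff_left[OF f L2_const fc] by (simp add: ip_const_left)
  also have "\<dots> = ip f f - c\<^sup>2"
    using ip_diff_right[OF f L2_const f] mean_diff[OF f L2_const]
    by (simp add: ip_const_right mean_const c_def power2_eq_square)
  finally show ?thesis
    unfolding c_def by simp
qed

lemma set_integral_Icc_split:
  fixes f :: "real \<Rightarrow> real"
  assumes "a \<le> c" "c \<le> b" "set_integrable lborel {a..b} f"
  shows "(LINT t:{a..b}|lborel. f t) = (LINT t:{a..c}|lborel. f t) + (LINT t:{c..b}|lborel. f t)"
proof -
  have "set_integrable lborel {a..c} f" "set_integrable lborel {c..b} f"
    using assms by (auto intro: set_integrable_subset)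
  moreover have "AE t in lborel. \<not> (t \<in> {a..c} \<and> t \<in> {c..b})"
    using AE_lborel_singleton[of c] by eventually_elim auto
  ultimately have "(LINT t:{a..c} \<union> {c..b}|lborel. f t) = (LINT t:{a..c}|lborel. f t) + (LINT t:{c..b}|lborel. f t)"
    by (intro set_integral_Un_AE) auto
  moreover have "{a..c} \<union> {c..b} = {a..b}"
    using assms by auto
  ultimately show ?thesis
    by simp
qed

lemma H10_L2_deriv: "H10 v dv \<Longrightarrow> L2 dv"
  unfolding H10_def by blast

lemma H10_eq_integral:
  assumes "H10 v dv" "x \<in> {0..1}"
  shows "v x = integral {0..x} dv"
proof -
  have "set_integrable lborel {0..x} dv"
    using assms(2) H10_L2_deriv[OF assms(1)] by (auto intro: L2_integrable_Icc)
  then show ?thesis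
    using assms unfolding H10_def by (simp add: set_borel_integral_eq_integral(2))
qed

lemma H10_continuous:
  assumes "H10 v dv"
  shows "continuous_on {0..1} v"
proof -
  have "dv integrable_on {0..1}"
    using L2_integrable[OF H10_L2_deriv[OF assms]] by (rule set_borel_integral_eq_integral(1))
  then have "continuous_on {0..1} (\<lambda>x. integral {0..x} dv)"
    by (rule indefinite_integral_continuous_1)
  then show ?thesis
    by (rule continuous_on_eq) (simp add: H10_eq_integral[OF assms])
qed

lemma H10_L2: "H10 v dv \<Longrightarrow> L2 v"
  using H10_continuous continuous_on_imp_L2 by blast

lemma H10_at_0: "H10 v dv \<Longrightarrow> v 0 = 0"
  using H10_eq_integral[of v dv 0] by simp

lemma H10_mean_deriv: "H10 v dv \<Longrightarrow> mean dv = 0"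
  unfolding H10_def mean_def by auto

lemma H10_integral_from:
  assumes v: "H10 v dv" and x: "x \<in> {0..1}"
  shows "(LINT t:{x..1}|lborel. dv t) = - v x"
  using set_integral_Icc_split[of 0 x 1 dv] x L2_integrable[OF H10_L2_deriv[OF v]] v
  unfolding H10_def by auto

lemma H10_diff:
  assumes v: "H10 v dv" and w: "H10 w dw"
  shows "H10 (\<lambda>x. v x - w x) (\<lambda>x. dv x - dw x)"
proof -
  have "(LINT t:{0..x}|lborel. dv t - dw t) = v x - w x" if x: "x \<in> {0..1}" for x
  proof -
    have "set_integrable lborel {0..x} dv" "set_integrable lborel {0..x} dw"
      using x H10_L2_deriv[OF v] H10_L2_deriv[OF w] by (auto intro: L2_integrable_Icc)
    then show ?thesis
      using v w x unfolding H10_def by simp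
  qed
  moreover have "L2 (\<lambda>x. dv x - dw x)"
    using H10_L2_deriv[OF v] H10_L2_deriv[OF w] by (rule L2_diff)
  ultimately show ?thesis
    using v w unfolding H10_def by simp
qed

section \<open>Integration by parts\<close>

lemma integral_triangle_swap:
  fixes F G :: "real \<Rightarrow> real"
  assumes F: "integrable lborel F" and G: "integrable lborel G"
  shows "(\<integral>x. F x * (\<integral>t. G t * of_bool (t \<le> x) \<partial>lborel) \<partial>lborel) =
         (\<integral>t. G t * (\<integral>x. F x * of_bool (t \<le> x) \<partial>lborel) \<partial>lborel)"
proof -
  define K where "K x t = F x * G t * of_bool (t \<le> x)" for x t
  have [measurable]: "F \<in> borel_measurable borel" "G \<in> borel_measurable borel"
    using F G by auto
  have FG: "integrable (lborel \<Otimes>\<^sub>M lborel) (\<lambda>(x, t). F x * G t)"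
  proof (rule lborel_pair.Fubini_integrable)
    show "(\<lambda>(x, t). F x * G t) \<in> borel_measurable (lborel \<Otimes>\<^sub>M lborel)"
      by measurable
    show "integrable lborel (\<lambda>x. \<integral>t. norm (case (x, t) of (x, t) \<Rightarrow> F x * G t) \<partial>lborel)"
      using F by (simp add: abs_mult integrable_abs)
    show "AE x in lborel. integrable lborel (\<lambda>t. case (x, t) of (x, t) \<Rightarrow> F x * G t)"
      using G by simp
  qed
  have "integrable (lborel \<Otimes>\<^sub>M lborel) (case_prod K)"
  proof (rule Bochner_Integration.integrable_bound[OF FG])
    show "case_prod K \<in> borel_measurable (lborel \<Otimes>\<^sub>M lborel)"
      unfolding K_def by measurable
    show "AE p in lborel \<Otimes>\<^sub>M lborel. norm (case_prod K p) \<le> norm (case p of (x, t) \<Rightarrow> F x * G t)"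
      by (intro AE_I2) (auto simp: K_def abs_mult)
  qed
  then have "(\<integral>t. (\<integral>x. K x t \<partial>lborel) \<partial>lborel) = (\<integral>x. (\<integral>t. K x t \<partial>lborel) \<partial>lborel)"
    by (rule lborel_pair.Fubini_integral)
  moreover have "(\<lambda>t. K x t) = (\<lambda>t. F x * (G t * of_bool (t \<le> x)))" for x
    unfolding K_def by auto
  moreover have "(\<lambda>x. K x t) = (\<lambda>x. G t * (F x * of_bool (t \<le> x)))" for t
    unfolding K_def by auto
  ultimately show ?thesis
    by simp
qed

lemma H10_integration_by_parts:
  assumes f: "H10 f df" and g: "H10 g dg"
  shows "ip df g + ip f dg = 0"
proof -
  define F where "F x = indicator {0..1} x * df x" for x :: real
  define G where "G t = indicator {0..1} t * dg t" for t :: real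
  have "integrable lborel F" "integrable lborel G"
    unfolding F_def G_def using L2_integrable H10_L2_deriv f g
    by (auto simp: set_integrable_def)
  note swap = integral_triangle_swap[OF this]
  have "(\<integral>t. G t * of_bool (t \<le> x) \<partial>lborel) = g x" if "x \<in> {0..1}" for x
  proof -
    have "(\<lambda>t. G t * of_bool (t \<le> x)) = (\<lambda>t. indicator {0..x} t * dg t)"
      using that by (auto simp: G_def indicator_def)
    then show ?thesis
      using g that unfolding H10_def set_lebesgue_integral_def by simp
  qed
  then have "ip df g = (\<integral>x. F x * (\<integral>t. G t * of_bool (t \<le> x) \<partial>lborel) \<partial>lborel)"
    unfolding ip_def set_lebesgue_integral_def F_def
    by (intro Bochner_Integration.integral_cong) (auto simp: indicator_def)
  moreover have "(\<integral>x. F x * of_bool (t \<le> x) \<partial>lborel) = - f t" if "t \<in> {0..1}" for t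
  proof -
    have "(\<lambda>x. F x * of_bool (t \<le> x)) = (\<lambda>x. indicator {t..1} x * df x)"
      using that by (auto simp: F_def indicator_def)
    then show ?thesis
      using H10_integral_from[OF f that] unfolding set_lebesgue_integral_def by simp
  qed
  then have "(\<integral>t. G t * (\<integral>x. F x * of_bool (t \<le> x) \<partial>lborel) \<partial>lborel) =
      (\<integral>t. - (indicator {0..1} t * (f t * dg t)) \<partial>lborel)"
    unfolding G_def by (intro Bochner_Integration.integral_cong) (auto simp: indicator_def)
  then have "(\<integral>t. G t * (\<integral>x. F x * of_bool (t \<le> x) \<partial>lborel) \<partial>lborel) = - ip f dg"
    unfolding ip_def set_lebesgue_integral_def by simp
  ultimately show ?thesis
    using swap by simp
qed

section \<open>Primitives of piecewise linear functions\<close>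

lemma Mh_diff:
  assumes p: "Mh n p" and q: "Mh n q"
  shows "Mh n (\<lambda>x. p x - q x)"
proof -
  have "\<exists>a b. \<forall>x\<in>{real (j-1)/real n..real j/real n}. p x - q x = a + b * x" if j: "j \<in> {1..n}" for j
  proof -
    obtain a b where "\<forall>x\<in>{real (j-1)/real n..real j/real n}. p x = a + b * x"
      using p j unfolding Mh_def by blast
    moreover obtain c d where "\<forall>x\<in>{real (j-1)/real n..real j/real n}. q x = c + d * x"
      using q j unfolding Mh_def by blast
    ultimately have "\<forall>x\<in>{real (j-1)/real n..real j/real n}. p x - q x = (a - c) + (b - d) * x"
      by (simp add: algebra_simps)
    then show ?thesis
      by blast
  qed
  then show ?thesis
    using p q unfolding Mh_def by (auto intro: continuous_on_diff)
qed

lemma set_integral_affine: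
  fixes a b l x :: real
  assumes "l \<le> x"
  shows "(LINT t:{l..x}|lborel. a + b * t) = (a * x + b * x\<^sup>2 / 2) - (a * l + b * l\<^sup>2 / 2)"
  unfolding set_lebesgue_integral_def
proof (rule integral_FTC_atLeastAtMost[OF assms])
  fix t
  show "((\<lambda>t. a * t + b * t\<^sup>2 / 2) has_vector_derivative a + b * t) (at t within {l..x})"
    unfolding has_real_derivative_iff_has_vector_derivative[symmetric]
    by (auto intro!: derivative_eq_intros)
qed (auto intro!: continuous_intros)

lemma primitive_of_Mh_piecewise_quadratic:
  assumes q: "Mh n q" and j: "j \<in> {1..n}"
  shows "\<exists>a b c. \<forall>x\<in>{real (j-1)/real n..real j/real n}.
           (LINT t:{0..x}|lborel. q t) = a + b * x + c * x\<^sup>2"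
proof -
  define l where "l = real (j-1)/real n"
  define r where "r = real j/real n"
  obtain a b where ab: "\<forall>x\<in>{l..r}. q x = a + b * x"
    using q j unfolding Mh_def l_def r_def by blast
  have lr: "0 \<le> l" "l \<le> r" "r \<le> 1"
    using j by (auto simp: l_def r_def divide_right_mono)
  have q_int: "set_integrable lborel {0..1} q"
    using q unfolding Mh_def by (blast intro: L2_integrable continuous_on_imp_L2)
  have "(LINT t:{0..x}|lborel. q t) =
      ((LINT t:{0..l}|lborel. q t) - (a * l + b * l\<^sup>2 / 2)) + a * x + b / 2 * x\<^sup>2"
    if x: "x \<in> {l..r}" for x
  proof -
    have "set_integrable lborel {0..x} q"
      using q_int x lr by (auto intro: set_integrable_subset)
    then have "(LINT t:{0..x}|lborel. q t) = (LINT t:{0..l}|lborel. q t) + (LINT t:{l..x}|lborel. q t)"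
      using x lr by (intro set_integral_Icc_split) auto
    also have "(LINT t:{l..x}|lborel. q t) = (LINT t:{l..x}|lborel. a + b * t)"
      using ab x by (intro set_lebesgue_integral_cong) auto
    also have "\<dots> = (a * x + b * x\<^sup>2 / 2) - (a * l + b * l\<^sup>2 / 2)"
      using x by (intro set_integral_affine) auto
    finally show ?thesis
      by simp
  qed
  then show ?thesis
    unfolding l_def r_def by blast
qed

lemma H10_primitive: "L2 g \<Longrightarrow> mean g = 0 \<Longrightarrow> H10 (\<lambda>x. LINT t:{0..x}|lborel. g t) g"
  unfolding H10_def mean_def by auto

definition lift_deriv :: "real \<Rightarrow> (real \<Rightarrow> real) \<Rightarrow> (real \<Rightarrow> real) \<Rightarrow> real \<Rightarrow> real"
  where "lift_deriv eps q dq x = eps * dq x - q x + mean q"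

lemma L2_lift_deriv: "L2 q \<Longrightarrow> L2 dq \<Longrightarrow> L2 (lift_deriv eps q dq)"
  unfolding lift_deriv_def[abs_def] by (intro L2_add L2_diff L2_mult L2_const)

lemma mean_lift_deriv:
  assumes "H10 q dq"
  shows "mean (lift_deriv eps q dq) = 0"
  using H10_L2[OF assms] H10_L2_deriv[OF assms] H10_mean_deriv[OF assms]
  unfolding lift_deriv_def[abs_def]
  by (simp add: mean_add mean_diff mean_mult mean_const L2_diff L2_mult L2_const)

lemma Vh_contains_lift_of_Mh:
  assumes q: "Mh n q" "H10 q dq"
  shows "\<exists>v. Vh n v \<and> H10 v (lift_deriv eps q dq)"
proof -
  define dv where "dv = lift_deriv eps q dq"
  define v where "v x = (LINT t:{0..x}|lborel. dv t)" for x
  have Lq: "L2 q" "L2 dq"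
    using q H10_L2 H10_L2_deriv by blast+
  have v: "H10 v dv"
    unfolding v_def dv_def using L2_lift_deriv[OF Lq] mean_lift_deriv[OF q(2)] by (rule H10_primitive)
  have v_eq: "v x = eps * q x - (LINT t:{0..x}|lborel. q t) + mean q * x" if x: "x \<in> {0..1}" for x
  proof -
    have "set_integrable lborel {0..x} q" "set_integrable lborel {0..x} dq"
      using x Lq by (auto intro: L2_integrable_Icc)
    moreover have "set_integrable lborel {0..x} (\<lambda>_. mean q)"
      by (simp add: set_integrable_def integrable_real_indicator emeasure_lborel_Icc_eq)
    ultimately have "v x = eps * (LINT t:{0..x}|lborel. dq t) - (LINT t:{0..x}|lborel. q t) + mean q * x"
      using x by (simp add: v_def dv_def lift_deriv_def[abs_def] set_integral_add set_integral_diff set_integral_const)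
    then show ?thesis
      using q(2) x unfolding H10_def by simp
  qed
  have "\<exists>a b c. \<forall>x\<in>{real (j-1)/real n..real j/real n}. v x = a + b * x + c * x\<^sup>2"
    if j: "j \<in> {1..n}" for j
  proof -
    obtain a b where ab: "\<forall>x\<in>{real (j-1)/real n..real j/real n}. q x = a + b * x"
      using q(1) j unfolding Mh_def by blast
    obtain a' b' c' where abc: "\<forall>x\<in>{real (j-1)/real n..real j/real n}.
        (LINT t:{0..x}|lborel. q t) = a' + b' * x + c' * x\<^sup>2"
      using primitive_of_Mh_piecewise_quadratic[OF q(1) j] by blast
    have "v x = (eps * a - a') + (eps * b - b' + mean q) * x + (- c') * x\<^sup>2"
      if x: "x \<in> {real (j-1)/real n..real j/real n}" for x
    proof -
      have "0 \<le> x" "x \<le> 1"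
        using x j by (auto intro: order_trans[of 0 "real (j-1)/real n"] order_trans[of x "real j/real n"])
      then show ?thesis
        using v_eq[of x] ab abc x by (simp add: algebra_simps)
    qed
    then show ?thesis
      by blast
  qed
  then have "Vh n v"
    using v H10_continuous H10_at_0 unfolding Vh_def H10_def by blast
  then show ?thesis
    using v unfolding dv_def by blast
qed

section \<open>Orthogonality of the error\<close>

definition star_ip :: "real \<Rightarrow> (real \<Rightarrow> real) \<Rightarrow> (real \<Rightarrow> real) \<Rightarrow> (real \<Rightarrow> real) \<Rightarrow> (real \<Rightarrow> real) \<Rightarrow> real"
  where "star_ip eps v dv w dw = eps\<^sup>2 * ip dv dw + ip v w - mean v * mean w"

lemma snorm_eq_sqrt_star_ip: "snorm eps v dv = sqrt (star_ip eps v dv v dv)"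
  unfolding snorm_def star_ip_def L2norm_def by (simp add: ip_self_nonneg power2_eq_square)

lemma star_ip_self_nonneg: "L2 v \<Longrightarrow> 0 \<le> star_ip eps v dv v dv"
  unfolding star_ip_def using mean_square_le_ip_self[of v] ip_self_nonneg[of dv]
  by (simp add: power2_eq_square add_increasing)

lemma star_ip_add_self:
  assumes e: "L2 e" "L2 de" and q: "L2 q" "L2 dq"
  shows "star_ip eps (\<lambda>x. e x + q x) (\<lambda>x. de x + dq x) (\<lambda>x. e x + q x) (\<lambda>x. de x + dq x) =
         star_ip eps e de e de + 2 * star_ip eps e de q dq + star_ip eps q dq q dq"
proof -
  have "ip (\<lambda>x. f x + g x) (\<lambda>x. f x + g x) = ip f f + 2 * ip f g + ip g g" if "L2 f" "L2 g" for f g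
    using that by (simp add: ip_add_left ip_add_right L2_add ip_commute[of g f])
  then show ?thesis
    using e q unfolding star_ip_def by (simp add: mean_add algebra_simps power2_eq_square)
qed

lemma snorm_le_if_star_orthogonal:
  assumes e: "L2 e" "L2 de" and q: "L2 q" "L2 dq" and orth: "star_ip eps e de q dq = 0"
  shows "snorm eps e de \<le> snorm eps (\<lambda>x. e x + q x) (\<lambda>x. de x + dq x)"
  unfolding snorm_eq_sqrt_star_ip star_ip_add_self[OF e q] orth
  using star_ip_self_nonneg[OF q(1)] by simp

lemma ip_lift_deriv:
  assumes "L2 w" "L2 q" "L2 dq"
  shows "ip w (lift_deriv eps q dq) = eps * ip w dq - ip w q + mean w * mean q"
  unfolding lift_deriv_def[abs_def] using assms by (simp add: ip_add_right ip_diff_right ip_mult_right ip_const_right L2_diff L2_mult L2_const)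

lemma ip_deriv_lift_deriv:
  assumes w: "H10 w dw" and q: "H10 q dq"
  shows "ip dw (lift_deriv eps q dq) = eps * ip dw dq + ip w dq"
  using ip_lift_deriv[of dw q dq eps] H10_integration_by_parts[OF w q] H10_mean_deriv[OF w]
    H10_L2_deriv[OF w] H10_L2[OF q] H10_L2_deriv[OF q]
  by simp

lemma star_ip_eq_ip_lift:
  assumes e: "H10 e de" and q: "H10 q dq"
  shows "star_ip eps e de q dq = ip (\<lambda>x. eps * de x - e x) (lift_deriv eps q dq)"
proof -
  have L: "L2 e" "L2 de" "L2 q" "L2 dq"
    using e q H10_L2 H10_L2_deriv by blast+
  have "ip (\<lambda>x. eps * de x - e x) (lift_deriv eps q dq) =
      eps * (eps * ip de dq + ip e dq) - (eps * ip e dq - ip e q + mean e * mean q)"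
    using L ip_deriv_lift_deriv[OF e q, of eps] ip_lift_deriv[of e q dq eps]
    by (simp add: ip_diff_left ip_mult_left L2_mult L2_lift_deriv)
  then show ?thesis
    unfolding star_ip_def by (simp add: algebra_simps power2_eq_square)
qed

lemma galerkin_orthogonality:
  assumes u: "H10 u du" and u_eq: "\<And>v dv. H10 v dv \<Longrightarrow> eps * ip du dv + ip du v = ip f v"
    and uh: "H10 uh duh" and wh: "H10 wh dwh"
    and eq1: "\<And>v dv. Vh n v \<Longrightarrow> H10 v dv \<Longrightarrow> ip dwh dv + eps * ip duh dv + ip duh v = ip f v"
    and eq2: "\<And>q dq. Mh n q \<Longrightarrow> H10 q dq \<Longrightarrow> eps * ip dq dwh + ip dq wh = 0"
    and q: "Mh n q" "H10 q dq"
  shows "star_ip eps (\<lambda>x. u x - uh x) (\<lambda>x. du x - duh x) q dq = 0"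
proof -
  define e where "e = (\<lambda>x. u x - uh x)"
  define de where "de = (\<lambda>x. du x - duh x)"
  define dv where "dv = lift_deriv eps q dq"
  obtain v where v: "Vh n v" "H10 v dv"
    using Vh_contains_lift_of_Mh[OF q] unfolding dv_def by blast
  have e: "H10 e de"
    unfolding e_def de_def using u uh by (rule H10_diff)
  have L: "L2 du" "L2 duh" "L2 v" "L2 dv"
    using u uh v(2) H10_L2 H10_L2_deriv by blast+
  have "ip dwh dv = eps * ip de dv + ip de v"
    using eq1[OF v] u_eq[OF v(2)] L unfolding de_def by (simp add: ip_diff_left algebra_simps)
  moreover have "ip dwh dv = 0"
    using ip_deriv_lift_deriv[OF wh q(2), of eps] eq2[OF q] unfolding dv_def by (simp add: ip_commute)
  moreover have "ip de v = - ip e dv"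
    using H10_integration_by_parts[OF e v(2)] by simp
  ultimately have "ip (\<lambda>x. eps * de x - e x) dv = 0"
    using e L H10_L2 H10_L2_deriv by (simp add: ip_diff_left ip_mult_left L2_mult)
  then show ?thesis
    using star_ip_eq_ip_lift[OF e q(2)] unfolding e_def de_def dv_def by simp
qed

theorem theorem3p2:
  fixes eps :: real and f u du uh duh wh dwh uI duI :: "real \<Rightarrow> real" and n :: nat
  assumes eps: "eps > 0"
    and f: "continuous_on {0..1} f"
    and u: "H10 u du"
    and u_eq: "\<And>v dv. H10 v dv \<Longrightarrow> eps * ip du dv + ip du v = ip f v"
    and n: "n \<ge> 2"
    and uh: "Mh n uh" "H10 uh duh"
    and wh: "Vh n wh" "H10 wh dwh"
    and eq1: "\<And>v dv. Vh n v \<Longrightarrow> H10 v dv \<Longrightarrow>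
               ip dwh dv + eps * ip duh dv + ip duh v = ip f v"
    and eq2: "\<And>q dq. Mh n q \<Longrightarrow> H10 q dq \<Longrightarrow>
               eps * ip dq dwh + ip dq wh = 0"
    and uI: "Mh n uI" "H10 uI duI" "\<And>j. j \<le> n \<Longrightarrow> uI (real j / real n) = u (real j / real n)"
  shows "snorm eps (\<lambda>x. u x - uh x) (\<lambda>x. du x - duh x)
           \<le> Inf {snorm eps (\<lambda>x. u x - p x) (\<lambda>x. du x - dp x) | p dp. Mh n p \<and> H10 p dp}
       \<and> Inf {snorm eps (\<lambda>x. u x - p x) (\<lambda>x. du x - dp x) | p dp. Mh n p \<and> H10 p dp}
           \<le> snorm eps (\<lambda>x. u x - uI x) (\<lambda>x. du x - duI x)"
proof -
  let ?S = "{snorm eps (\<lambda>x. u x - p x) (\<lambda>x. du x - dp x) | p dp. Mh n p \<and> H10 p dp}"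
  have e: "H10 (\<lambda>x. u x - uh x) (\<lambda>x. du x - duh x)"
    using u uh(2) by (rule H10_diff)
  have best: "snorm eps (\<lambda>x. u x - uh x) (\<lambda>x. du x - duh x) \<le> s" if "s \<in> ?S" for s
  proof -
    obtain p dp where p: "Mh n p" "H10 p dp" and s: "s = snorm eps (\<lambda>x. u x - p x) (\<lambda>x. du x - dp x)"
      using \<open>s \<in> ?S\<close> by blast
    have q: "Mh n (\<lambda>x. uh x - p x)" "H10 (\<lambda>x. uh x - p x) (\<lambda>x. duh x - dp x)"
      using Mh_diff[OF uh(1) p(1)] H10_diff[OF uh(2) p(2)] .
    show ?thesis
      using snorm_le_if_star_orthogonal[OF H10_L2[OF e] H10_L2_deriv[OF e] H10_L2[OF q(2)] H10_L2_deriv[OF q(2)]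
          galerkin_orthogonality[OF u u_eq uh(2) wh(2) eq1 eq2 q]]
      unfolding s by simp
  qed
  have uI_in: "snorm eps (\<lambda>x. u x - uI x) (\<lambda>x. du x - duI x) \<in> ?S"
    using uI(1,2) by blast
  have "bdd_below ?S"
    using best by (rule bdd_belowI)
  show ?thesis
  proof
    show "snorm eps (\<lambda>x. u x - uh x) (\<lambda>x. du x - duh x) \<le> Inf ?S"
      using uI_in best by (intro cInf_greatest) auto
    show "Inf ?S \<le> snorm eps (\<lambda>x. u x - uI x) (\<lambda>x. du x - duI x)"
      using uI_in \<open>bdd_below ?S\<close> by (rule cInf_lower)
  qed
qed

end
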